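(* Under the standing assumptions below, let $k\in\{0,\dots,n-1\}$. If $c\in I$ and $x_{k+1}\notin\mathrm{var}(c)$, then $I_{k+1}(c)=I_k(c)$. Moreover, writing $I(x_{k+1})=\{c_1,\dots,c_m\}$ with $c_1\prec c_2\prec\dots\prec c_m$, we have $I_{k+1}(c_1)=I_k(c_1)$ and, for every $i<m$, $I_{k+1}(c_{i+1})=I_k(c_{i+1})\cup I_{k+1}(c_i)$.
   Context: Standing assumptions: $I$ is a finite set of weighted constraints with default values on a finite domain $D$ such that distinct constraints have distinct variable sets, $\mathcal H(I)=(\mathrm{var}(I),\{\mathrm{var}(c)\mid c\in I\})$ is $\beta$-acyclic, and $(x_1,\dots,x_n)$ is a $\beta$-elimination order of $\mathcal H(I)$ (an enumeration of $\mathrm{var}(I)$ such that for each $k$, $x_{k+1}$ is a nest point—the edges containing it are totally ordered by inclusion—of the hypergraph with vertices $\mathrm{var}(I)\setminus X_k$ and edges $\{e\setminus X_k\}\setminus\{\emptyset\}$). $X_k=\{x_1,\dots,x_k\}$. For $c,d\in I$: $c\prec d$ iff there is $k$ with $\mathrm{var}(c)\setminus X_k\subsetneq\mathrm{var}(d)\setminus X_k$ (this is a total order); $c\preceq d$ iff $c\prec d$ or $c=d$. Relations $\prec_k$ are defined inductively: $\prec_0=\emptyset$; $c\prec_{k+1}d$ iff $c\prec_k d$ or there is $e\in I$ with $c\preceq_k e\prec d$ and $x_{k+1}\in\mathrm{var}(d)\cap\mathrm{var}(e)$; here $c\preceq_k d$ iff $c=d$ or $c\prec_k d$. For $c\in I$,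 $I_k(c)=\{d\in I\mid d\preceq_k c\}$. For a variable $x$, $I(x)=\{c\in I\mid x\in\mathrm{var}(c)\}$. *)

theory Defs
  imports Main
begin

definition nest_point :: "'v set \<Rightarrow> 'v set set \<Rightarrow> 'v \<Rightarrow> bool" where
  "nest_point V E x \<longleftrightarrow> x \<in> V \<and>
     (\<forall>e1\<in>E. \<forall>e2\<in>E. x \<in> e1 \<and> x \<in> e2 \<longrightarrow> e1 \<subseteq> e2 \<or> e2 \<subseteq> e1)"

definition beta_elim_order :: "'v set \<Rightarrow> 'v set set \<Rightarrow> 'v list \<Rightarrow> bool" where
  "beta_elim_order V E xs \<longleftrightarrow> distinct xs \<and> set xs = V \<and>
     (\<forall>k < length xs.
        nest_point (V - set (take k xs))
                   ((\<lambda>e. e - set (take k xs)) ` E - {{}}) (xs ! k))"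

definition Xk :: "'v list \<Rightarrow> nat \<Rightarrow> 'v set" where
  "Xk xs k = set (take k xs)"

definition prec :: "('c \<Rightarrow> 'v set) \<Rightarrow> 'v list \<Rightarrow> 'c \<Rightarrow> 'c \<Rightarrow> bool" where
  "prec var xs c d \<longleftrightarrow> (\<exists>k. var c - Xk xs k \<subset> var d - Xk xs k)"

text \<open>c \<prec>_k d (the relation for index k); xs ! k is x_{k+1}\<close>
fun prec_k :: "'c set \<Rightarrow> ('c \<Rightarrow> 'v set) \<Rightarrow> 'v list \<Rightarrow> nat \<Rightarrow> 'c \<Rightarrow> 'c \<Rightarrow> bool" where
  "prec_k I var xs 0 c d = False"
| "prec_k I var xs (Suc k) c d \<longleftrightarrow> prec_k I var xs k c d \<or>
     (\<exists>e\<in>I. (c = e \<or> prec_k I var xs k c e) \<and> prec var xs e d \<and>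
             xs ! k \<in> var d \<inter> var e)"

definition Ik :: "'c set \<Rightarrow> ('c \<Rightarrow> 'v set) \<Rightarrow> 'v list \<Rightarrow> nat \<Rightarrow> 'c \<Rightarrow> 'c set" where
  "Ik I var xs k c = {d \<in> I. d = c \<or> prec_k I var xs k d c}"

end

theory Submission
  imports Defs
begin

text \<open>
  Unfolding one step of the inductive definition of \<open>\<prec>\<^sub>k\<close> shows that
  \<open>I\<^sub>k\<^sub>+\<^sub>1(c)\<close> is \<open>I\<^sub>k(c)\<close> enlarged by the sets \<open>I\<^sub>k(e)\<close> of all constraints \<open>e \<prec> c\<close>
  with \<open>x\<^sub>k\<^sub>+\<^sub>1 \<in> var c \<inter> var e\<close> (lemma \<open>Ik_Suc\<close>).  If \<open>x\<^sub>k\<^sub>+\<^sub>1 \<notin> var c\<close> nothing is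
  added.  Otherwise the relevant \<open>e\<close> are the constraints of \<open>I(x\<^sub>k\<^sub>+\<^sub>1)\<close> below \<open>c\<close>;
  since \<open>\<prec>\<close> is a strict (asymmetric) relation, in the \<open>\<prec>\<close>-sorted enumeration
  \<open>c\<^sub>1,\<dots>,c\<^sub>m\<close> of \<open>I(x\<^sub>k\<^sub>+\<^sub>1)\<close> the predecessors of \<open>c\<^sub>j\<close> are exactly \<open>c\<^sub>1,\<dots>,c\<^sub>j\<^sub>-\<^sub>1\<close>
  (lemma \<open>sorted_wrt_predecessors\<close>).  Hence
  \<open>I\<^sub>k\<^sub>+\<^sub>1(c\<^sub>j) = I\<^sub>k(c\<^sub>j) \<union> I\<^sub>k(c\<^sub>1) \<union> \<dots> \<union> I\<^sub>k(c\<^sub>j\<^sub>-\<^sub>1)\<close> (lemma \<open>Ik_Suc_sorted\<close>), and both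
  claims about \<open>c\<^sub>1\<close> and \<open>c\<^sub>i\<^sub>+\<^sub>1\<close> are immediate rearrangements of this formula.
\<close>

text \<open>The order \<open>\<prec>\<close> is asymmetric: two strict inclusions after removing different
  prefixes of the elimination order would contradict each other after removing
  the longer prefix.\<close>

lemma prec_asym:
  assumes "prec var xs c d" shows "\<not> prec var xs d c"
proof
  assume "prec var xs d c"
  then obtain j where j: "var d - Xk xs j \<subset> var c - Xk xs j" unfolding prec_def by auto
  from assms obtain k where k: "var c - Xk xs k \<subset> var d - Xk xs k" unfolding prec_def by auto
  have mono: "Xk xs a \<subseteq> Xk xs b" if "a \<le> b" for a b
    using that unfolding Xk_def by (simp add: set_take_subset_set_take)
  show False
  proof (cases "k \<le> j")
    case True
    then have "var c - Xk xs j \<subseteq> var d - Xk xs j" using k mono[of k j] by blast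
    then show False using j by blast
  next
    case False
    then have "var d - Xk xs k \<subseteq> var c - Xk xs k" using j mono[of j k] by auto
    then show False using k by blast
  qed
qed

lemma asymp_prec: "asymp (prec var xs)"
  by (rule asympI) (rule prec_asym)

lemma sorted_wrt_predecessors:
  assumes sorted: "sorted_wrt R cs" and asym: "asymp R" and j: "j < length cs"
  shows "{e \<in> set cs. R e (cs ! j)} = set (take j cs)"
proof (intro equalityI subsetI)
  fix e assume "e \<in> {e \<in> set cs. R e (cs ! j)}"
  then obtain i where i: "i < length cs" "e = cs ! i" and R: "R (cs ! i) (cs ! j)"
    by (auto simp: in_set_conv_nth)
  have "i < j"
  proof (rule ccontr)
    assume "\<not> i < j"
    then have "i = j \<or> j < i" by linarith
    then have "i = j \<or> R (cs ! j) (cs ! i)"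
      using sorted i by (auto simp: sorted_wrt_iff_nth_less)
    then show False using R asym by (auto dest: asympD)
  qed
  then show "e \<in> set (take j cs)" using i j by (auto simp: in_set_conv_nth)
next
  fix e assume "e \<in> set (take j cs)"
  then obtain i where "i < j" "e = cs ! i" using j by (auto simp: in_set_conv_nth)
  then show "e \<in> {e \<in> set cs. R e (cs ! j)}"
    using sorted j by (auto simp: sorted_wrt_iff_nth_less)
qed

lemma Ik_Suc:
  "Ik I var xs (Suc k) c =
     Ik I var xs k c \<union>
     (\<Union>e \<in> {e \<in> I. prec var xs e c \<and> xs ! k \<in> var c \<inter> var e}. Ik I var xs k e)"
  unfolding Ik_def by auto

lemma Ik_Suc_sorted:
  assumes set_cs: "set cs = {c \<in> I. xs ! k \<in> var c}"
    and sorted: "sorted_wrt (prec var xs) cs" and j: "j < length cs"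
  shows "Ik I var xs (Suc k) (cs ! j) =
           Ik I var xs k (cs ! j) \<union> (\<Union>e \<in> set (take j cs). Ik I var xs k e)"
proof -
  have "xs ! k \<in> var (cs ! j)" using set_cs j nth_mem by blast
  then have "{e \<in> I. prec var xs e (cs ! j) \<and> xs ! k \<in> var (cs ! j) \<inter> var e}
               = {e \<in> set cs. prec var xs e (cs ! j)}"
    using set_cs by auto
  also have "\<dots> = set (take j cs)"
    using sorted_wrt_predecessors[OF sorted asymp_prec j] .
  finally show ?thesis by (simp only: Ik_Suc)
qed

theorem lemma7:
  fixes I :: "'c set" and var :: "'c \<Rightarrow> 'v set" and xs :: "'v list" and k :: nat
  assumes finI: "finite I"
    and fin_scopes: "\<forall>c\<in>I. finite (var c)"
    and distinct_scopes: "inj_on var I"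
    and elim: "beta_elim_order (\<Union>(var ` I)) (var ` I) xs"
    and k: "k < length xs"
  shows "(\<forall>c\<in>I. xs ! k \<notin> var c \<longrightarrow> Ik I var xs (Suc k) c = Ik I var xs k c)
       \<and> (\<forall>cs. set cs = {c \<in> I. xs ! k \<in> var c} \<and> sorted_wrt (prec var xs) cs \<longrightarrow>
            Ik I var xs (Suc k) (cs ! 0) = Ik I var xs k (cs ! 0)
          \<and> (\<forall>i. Suc i < length cs \<longrightarrow>
               Ik I var xs (Suc k) (cs ! Suc i) = Ik I var xs k (cs ! Suc i) \<union> Ik I var xs (Suc k) (cs ! i)))"
proof (intro conjI allI impI ballI)
  fix c assume "xs ! k \<notin> var c"
  then show "Ik I var xs (Suc k) c = Ik I var xs k c" by (simp add: Ik_Suc)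
next
  fix cs assume "set cs = {c \<in> I. xs ! k \<in> var c} \<and> sorted_wrt (prec var xs) cs"
  then have set_cs: "set cs = {c \<in> I. xs ! k \<in> var c}" and sorted: "sorted_wrt (prec var xs) cs"
    by auto
  note step = Ik_Suc_sorted[OF set_cs sorted]
  have "xs ! k \<in> \<Union>(var ` I)" using elim k unfolding beta_elim_order_def by auto
  then have "0 < length cs" using set_cs by auto
  then show "Ik I var xs (Suc k) (cs ! 0) = Ik I var xs k (cs ! 0)" by (simp add: step)
  fix i assume i: "Suc i < length cs"
  then have "set (take (Suc i) cs) = insert (cs ! i) (set (take i cs))"
    by (simp add: take_Suc_conv_app_nth)
  then show "Ik I var xs (Suc k) (cs ! Suc i) = Ik I var xs k (cs ! Suc i) \<union> Ik I var xs (Suc k) (cs ! i)"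
    using i by (auto simp: step)
qed

end
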